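(* Let $(S,\mathcal{E})$ be a qualitative evidence frame and let $\mathfrak{F}$ be a set of evidence allocation functions on $(S,\mathcal{E})$. Define $d:2^{\mathcal{E}}\to\tau_{\mathcal{E}}$ by $d(\emptyset)=S$ and, for $\mathbf{E}\neq\emptyset$, $d(\mathbf{E})=\min(\mathrm{dense}(\mathbf{E}),\subseteq)$, the least (w.r.t. inclusion) element of $\tau_{\mathbf{E}}$ that is dense in $\bigcup\mathbf{E}$ w.r.t. $\tau_{\mathbf{E}}$ (such a least element exists). Then $\mathfrak{F}\cup\{d\}$ is a set of evidence allocation functions on $(S,\mathcal{E})$.
   Context: A qualitative evidence frame is a pair $(S,\mathcal{E})$ where $S$ is a finite nonempty set and $\mathcal{E}$ is a nonempty family of subsets of $S$ with $\emptyset\notin\mathcal{E}$ and $S\notin\mathcal{E}$. For any family $\mathbf{E}\subseteq 2^S$, $\tau_{\mathbf{E}}$ denotes the topology on $S$ generated by $\mathbf{E}$ (as a subbasis): it consists of $\emptyset$, $S$, all finite intersections of members of $\mathbf{E}$, and all arbitrary unions of such finite intersections. For $\mathbf{E}\subseteq\mathcal{E}$, an element $D\in\tau_{\mathbf{E}}$ is called dense in $\bigcup\mathbf{E}$ w.r.t. $\tau_{\mathbf{E}}$ if $D\cap T\neq\emptyset$ for every nonempty $T\in\tau_{\mathbf{E}}$; $\mathrm{dense}(\mathbf{E})$ is the set of such elements. A set of evidence allocation functions on $(S,\mathcal{E})$ is a set $\mathfrak{F}$ of functions $2^{\mathcal{E}}\to\tau_{\mathcal{E}}$ such that for all $f,g\in\mathfrak{F}$: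 (1) $f(\emptyset)=S$; (2) for every nonempty $\mathbf{E}\subseteq\mathcal{E}$, either $f(\mathbf{E})=\emptyset$, or $f(\mathbf{E})\in\tau_{\mathbf{E}}$ and $f(\mathbf{E})$ is dense in $\bigcup\mathbf{E}$ w.r.t. $\tau_{\mathbf{E}}$; (3) for every $\mathbf{E}\subseteq\mathcal{E}$, $f(\mathbf{E})\subseteq g(\mathbf{E})$ or $g(\mathbf{E})\subseteq f(\mathbf{E})$. *)

theory Defs
  imports Main
begin

definition qe_frame :: "'a set \<Rightarrow> 'a set set \<Rightarrow> bool" where
  "qe_frame S \<E> \<longleftrightarrow> finite S \<and> S \<noteq> {} \<and> \<E> \<noteq> {} \<and> \<E> \<subseteq> Pow S \<and> {} \<notin> \<E> \<and> S \<notin> \<E>"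

definition gen_top :: "'a set \<Rightarrow> 'a set set \<Rightarrow> 'a set set" where
  "gen_top S E = insert {} (insert S
     {\<Union>U | U. U \<subseteq> {\<Inter>F | F. finite F \<and> F \<noteq> {} \<and> F \<subseteq> E}})"

definition dense_set :: "'a set \<Rightarrow> 'a set set \<Rightarrow> 'a set set" where
  "dense_set S E = {D \<in> gen_top S E. \<forall>T\<in>gen_top S E. T \<noteq> {} \<longrightarrow> D \<inter> T \<noteq> {}}"

definition eaf_set :: "'a set \<Rightarrow> 'a set set \<Rightarrow> ('a set set \<Rightarrow> 'a set) set \<Rightarrow> bool" where
  "eaf_set S \<E> \<FF> \<longleftrightarrow>
     (\<forall>f\<in>\<FF>. (\<forall>E. E \<subseteq> \<E> \<longrightarrow> f E \<in> gen_top S \<E>)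
        \<and> f {} = S
        \<and> (\<forall>E. E \<subseteq> \<E> \<and> E \<noteq> {} \<longrightarrow> f E = {} \<or> (f E \<in> gen_top S E \<and> f E \<in> dense_set S E)))
   \<and> (\<forall>f\<in>\<FF>. \<forall>g\<in>\<FF>. \<forall>E. E \<subseteq> \<E> \<longrightarrow> f E \<subseteq> g E \<or> g E \<subseteq> f E)"

definition min_dense :: "'a set \<Rightarrow> 'a set set \<Rightarrow> 'a set" where
  "min_dense S E = (if E = {} then S
     else (THE D. D \<in> dense_set S E \<and> (\<forall>D'\<in>dense_set S E. D \<subseteq> D')))"

end

theory Submission
  imports Defs
begin

text \<open>On a finite carrier the topology \<open>\<tau>\<^sub>E\<close> is finite, and the dense open sets are closed
  under binary, hence finite, intersections: a dense open \<open>A\<close> meets every nonempty open \<open>T\<close> in a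
  nonempty open set \<open>A \<inter> T\<close>, which a dense \<open>B\<close> meets again. So the intersection of all dense
  open sets is the least one. At nonempty \<open>E\<close> every allocation value \<open>f(E)\<close> is empty or dense
  open, hence comparable with this least element, so adjoining \<open>d\<close> keeps all values at each \<open>E\<close>
  linearly ordered.\<close>

definition finite_inters :: "'a set set \<Rightarrow> 'a set set" where
  "finite_inters E = {\<Inter>F | F. finite F \<and> F \<noteq> {} \<and> F \<subseteq> E}"

lemma gen_top_cases:
  assumes "X \<in> gen_top S E"
  obtains "X = {}" | "X = S" | U where "U \<subseteq> finite_inters E" "X = \<Union>U"
  using assms unfolding gen_top_def finite_inters_def by blast

lemma empty_mem_gen_top: "{} \<in> gen_top S E"
  and top_mem_gen_top: "S \<in> gen_top S E"
  and Union_mem_gen_top: "U \<subseteq> finite_inters E \<Longrightarrow> \<Union>U \<in> gen_top S E"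
  unfolding gen_top_def finite_inters_def by blast+

lemma finite_inters_mono: "E \<subseteq> E' \<Longrightarrow> finite_inters E \<subseteq> finite_inters E'"
  unfolding finite_inters_def by blast

lemma Int_mem_finite_inters:
  assumes "u \<in> finite_inters E" "v \<in> finite_inters E"
  shows "u \<inter> v \<in> finite_inters E"
proof -
  obtain F G where "u = \<Inter>F" "finite F" "F \<noteq> {}" "F \<subseteq> E"
    and "v = \<Inter>G" "finite G" "G \<noteq> {}" "G \<subseteq> E"
    using assms unfolding finite_inters_def by blast
  then have "u \<inter> v = \<Inter>(F \<union> G)" "finite (F \<union> G)" "F \<union> G \<noteq> {}" "F \<union> G \<subseteq> E"
    by (simp_all add: Inter_Un_distrib)
  then show ?thesis unfolding finite_inters_def by blast
qed

lemma gen_top_subset_Pow: "E \<subseteq> Pow S \<Longrightarrow> gen_top S E \<subseteq> Pow S"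
  unfolding gen_top_def by blast

lemma gen_top_mono:
  assumes "E \<subseteq> E'"
  shows "gen_top S E \<subseteq> gen_top S E'"
proof
  fix X assume "X \<in> gen_top S E"
  then show "X \<in> gen_top S E'"
    using finite_inters_mono[OF assms]
    by (cases rule: gen_top_cases) (auto intro: empty_mem_gen_top top_mem_gen_top Union_mem_gen_top)
qed

lemma gen_top_Int:
  assumes "E \<subseteq> Pow S" and A: "A \<in> gen_top S E" and B: "B \<in> gen_top S E"
  shows "A \<inter> B \<in> gen_top S E"
proof -
  have "A \<subseteq> S" "B \<subseteq> S" using gen_top_subset_Pow[OF assms(1)] A B by auto
  from A show ?thesis
  proof (cases rule: gen_top_cases)
    case (3 U)
    from B show ?thesis
    proof (cases rule: gen_top_cases)
      case (3 V)
      have "A \<inter> B = \<Union>((\<lambda>(u, v). u \<inter> v) ` (U \<times> V))" unfolding \<open>A = \<Union>U\<close> \<open>B = \<Union>V\<close> by auto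
      moreover have "(\<lambda>(u, v). u \<inter> v) ` (U \<times> V) \<subseteq> finite_inters E"
        using \<open>U \<subseteq> finite_inters E\<close> \<open>V \<subseteq> finite_inters E\<close> by (auto intro: Int_mem_finite_inters)
      ultimately show ?thesis by (simp add: Union_mem_gen_top)
    qed (use A \<open>A \<subseteq> S\<close> empty_mem_gen_top in \<open>simp_all add: Int_absorb2\<close>)
  qed (use B \<open>B \<subseteq> S\<close> empty_mem_gen_top in \<open>simp_all add: Int_absorb1\<close>)
qed

lemma top_mem_dense_set:
  assumes "E \<subseteq> Pow S"
  shows "S \<in> dense_set S E"
  using gen_top_subset_Pow[OF assms] top_mem_gen_top unfolding dense_set_def by (auto simp: Int_absorb1)

lemma dense_set_Int:
  assumes "E \<subseteq> Pow S" and A: "A \<in> dense_set S E" and B: "B \<in> dense_set S E"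
  shows "A \<inter> B \<in> dense_set S E"
proof -
  have "A \<inter> B \<inter> T \<noteq> {}" if "T \<in> gen_top S E" "T \<noteq> {}" for T
  proof -
    have "A \<inter> T \<in> gen_top S E" "A \<inter> T \<noteq> {}"
      using gen_top_Int[OF assms(1)] A that unfolding dense_set_def by auto
    then have "B \<inter> (A \<inter> T) \<noteq> {}" using B unfolding dense_set_def by simp
    then show ?thesis by (simp add: Int_ac)
  qed
  moreover have "A \<inter> B \<in> gen_top S E"
    using gen_top_Int[OF assms(1)] A B unfolding dense_set_def by simp
  ultimately show ?thesis unfolding dense_set_def by simp
qed

lemma Inter_mem_if_Int_closed:
  assumes "finite A" "A \<noteq> {}" "A \<subseteq> D" and "\<And>x y. x \<in> D \<Longrightarrow> y \<in> D \<Longrightarrow> x \<inter> y \<in> D"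
  shows "\<Inter>A \<in> D"
  using assms(1-3) by (induction A rule: finite_ne_induct) (simp_all add: assms(4))

lemma Inter_dense_set_mem:
  assumes "finite S" "E \<subseteq> Pow S"
  shows "\<Inter>(dense_set S E) \<in> dense_set S E"
proof (rule Inter_mem_if_Int_closed)
  have "dense_set S E \<subseteq> Pow S"
    using gen_top_subset_Pow[OF assms(2)] unfolding dense_set_def by auto
  then show "finite (dense_set S E)" using assms(1) by (simp add: finite_subset)
  show "dense_set S E \<noteq> {}" using top_mem_dense_set[OF assms(2)] by auto
qed (simp_all add: dense_set_Int[OF assms(2)])

lemma ex1_least_dense_set:
  assumes "finite S" "E \<subseteq> Pow S"
  shows "\<exists>!D. D \<in> dense_set S E \<and> (\<forall>D'\<in>dense_set S E. D \<subseteq> D')"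
proof (rule ex1I)
  show "\<Inter>(dense_set S E) \<in> dense_set S E \<and> (\<forall>D'\<in>dense_set S E. \<Inter>(dense_set S E) \<subseteq> D')"
    using Inter_dense_set_mem[OF assms] by (simp add: Inter_lower)
  show "D = \<Inter>(dense_set S E)" if "D \<in> dense_set S E \<and> (\<forall>D'\<in>dense_set S E. D \<subseteq> D')" for D
    using that Inter_dense_set_mem[OF assms] by (simp add: Inter_lower Inter_greatest subset_antisym)
qed

lemma min_dense_least:
  assumes "finite S" "E \<subseteq> Pow S" "E \<noteq> {}"
  shows min_dense_mem_dense_set: "min_dense S E \<in> dense_set S E"
    and min_dense_subset: "D \<in> dense_set S E \<Longrightarrow> min_dense S E \<subseteq> D"
  using theI'[OF ex1_least_dense_set[OF assms(1,2)]] assms(3) unfolding min_dense_def by auto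

definition evidence_allocation :: "'a set \<Rightarrow> 'a set set \<Rightarrow> ('a set set \<Rightarrow> 'a set) \<Rightarrow> bool" where
  "evidence_allocation S \<E> f \<longleftrightarrow>
     (\<forall>E. E \<subseteq> \<E> \<longrightarrow> f E \<in> gen_top S \<E>)
     \<and> f {} = S
     \<and> (\<forall>E. E \<subseteq> \<E> \<and> E \<noteq> {} \<longrightarrow> f E = {} \<or> (f E \<in> gen_top S E \<and> f E \<in> dense_set S E))"

lemma eaf_set_iff:
  "eaf_set S \<E> \<FF> \<longleftrightarrow> (\<forall>f\<in>\<FF>. evidence_allocation S \<E> f)
     \<and> (\<forall>f\<in>\<FF>. \<forall>g\<in>\<FF>. \<forall>E. E \<subseteq> \<E> \<longrightarrow> f E \<subseteq> g E \<or> g E \<subseteq> f E)"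
  unfolding eaf_set_def evidence_allocation_def ..

lemma eaf_set_insert:
  assumes "eaf_set S \<E> \<FF>" and "evidence_allocation S \<E> g"
    and "\<And>f E. f \<in> \<FF> \<Longrightarrow> E \<subseteq> \<E> \<Longrightarrow> f E \<subseteq> g E \<or> g E \<subseteq> f E"
  shows "eaf_set S \<E> (insert g \<FF>)"
proof -
  have alloc: "\<forall>f\<in>\<FF>. evidence_allocation S \<E> f"
    and cmp: "\<forall>f\<in>\<FF>. \<forall>h\<in>\<FF>. \<forall>E. E \<subseteq> \<E> \<longrightarrow> f E \<subseteq> h E \<or> h E \<subseteq> f E"
    using assms(1) unfolding eaf_set_iff by simp_all
  have "f E \<subseteq> h E \<or> h E \<subseteq> f E" if "f \<in> insert g \<FF>" "h \<in> insert g \<FF>" "E \<subseteq> \<E>" for f h E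
    using that
  proof (elim insertE)
    assume "f = g" "h \<in> \<FF>"
    then show ?thesis using assms(3)[of h E] \<open>E \<subseteq> \<E>\<close> by (simp only: disj_commute)
  qed (use cmp assms(3) in simp_all)
  then show ?thesis using alloc assms(2) unfolding eaf_set_iff by simp
qed

lemma evidence_allocation_min_dense:
  assumes "finite S" "\<E> \<subseteq> Pow S"
  shows "evidence_allocation S \<E> (min_dense S)"
  unfolding evidence_allocation_def
proof (intro conjI allI impI)
  fix E assume "E \<subseteq> \<E>"
  show "min_dense S E \<in> gen_top S \<E>"
  proof (cases "E = {}")
    case False
    have "min_dense S E \<in> gen_top S E"
      using min_dense_mem_dense_set[OF assms(1) order_trans[OF \<open>E \<subseteq> \<E>\<close> assms(2)] False]
      unfolding dense_set_def by simp
    then show ?thesis using gen_top_mono[OF \<open>E \<subseteq> \<E>\<close>] by auto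
  qed (simp add: min_dense_def top_mem_gen_top)
next
  show "min_dense S {} = S" by (simp add: min_dense_def)
next
  fix E assume "E \<subseteq> \<E> \<and> E \<noteq> {}"
  then have "min_dense S E \<in> dense_set S E"
    using min_dense_mem_dense_set[OF assms(1) order_trans[OF _ assms(2)]] by simp
  then show "min_dense S E = {} \<or> min_dense S E \<in> gen_top S E \<and> min_dense S E \<in> dense_set S E"
    unfolding dense_set_def by simp
qed

lemma min_dense_subset_evidence_allocation:
  assumes "finite S" "\<E> \<subseteq> Pow S" "evidence_allocation S \<E> f" "E \<subseteq> \<E>"
  shows "f E = {} \<or> min_dense S E \<subseteq> f E"
proof (cases "E = {}")
  case False
  then have "f E = {} \<or> f E \<in> dense_set S E"
    using assms(3,4) unfolding evidence_allocation_def by auto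
  then show ?thesis
    using min_dense_subset[OF assms(1) order_trans[OF assms(4,2)] False] by auto
qed (use assms(3) in \<open>simp add: evidence_allocation_def min_dense_def\<close>)

theorem proposition3:
  fixes S :: "'a set" and \<E> :: "'a set set" and \<FF> :: "('a set set \<Rightarrow> 'a set) set"
  assumes "qe_frame S \<E>"
    and "eaf_set S \<E> \<FF>"
  shows "(\<forall>E. E \<subseteq> \<E> \<and> E \<noteq> {} \<longrightarrow>
            (\<exists>!D. D \<in> dense_set S E \<and> (\<forall>D'\<in>dense_set S E. D \<subseteq> D')))
         \<and> eaf_set S \<E> (insert (min_dense S) \<FF>)"
proof (intro conjI allI impI)
  have fin: "finite S" and sub: "\<E> \<subseteq> Pow S"
    using assms(1) unfolding qe_frame_def by auto
  show "\<exists>!D. D \<in> dense_set S E \<and> (\<forall>D'\<in>dense_set S E. D \<subseteq> D')" if "E \<subseteq> \<E> \<and> E \<noteq> {}" for E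
    using ex1_least_dense_set[OF fin order_trans[OF _ sub]] that by simp
  show "eaf_set S \<E> (insert (min_dense S) \<FF>)"
  proof (rule eaf_set_insert[OF assms(2) evidence_allocation_min_dense[OF fin sub]])
    fix f E assume "f \<in> \<FF>" "E \<subseteq> \<E>"
    then have "evidence_allocation S \<E> f" using assms(2) by (simp add: eaf_set_iff)
    then show "f E \<subseteq> min_dense S E \<or> min_dense S E \<subseteq> f E"
      using min_dense_subset_evidence_allocation[OF fin sub _ \<open>E \<subseteq> \<E>\<close>] by auto
  qed
qed

end
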